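(* In the BTS-RED-Known setting, let $p=\frac{1}{4e\sqrt\pi}$ and let $S_t=\{\boldsymbol x\in\mathcal X:\Delta(\boldsymbol x)>c_t\sigma_{t-1}(\boldsymbol x)\}$ be the set of saturated points, where $\Delta(\boldsymbol x)=f(\boldsymbol x^* )-f(\boldsymbol x)$. For every $t\ge1$ and every history $\mathcal F_{t-1}$ on which $E^f(t)$ holds, $$\mathbb P\big(\boldsymbol x^{(b)}_t\in\mathcal X\setminus S_t\mid\mathcal F_{t-1}\big)\ge p-1/t^2\qquad\text{for all }b\in[b_t].$$
   Context: Setting (BTS-RED-Known). $\mathcal X$ is a finite set; $k$ is a squared-exponential kernel on $\mathcal X$ (so $k(\boldsymbol x,\boldsymbol x)=1$); the unknown objective $f:\mathcal X\to\mathbb R$ lies in the RKHS $\mathcal H_k$ with $\|f\|_{\mathcal H_k}\le B$ for a known $B>0$. A known noise variance function $\sigma^2:\mathcal X\to(0,\infty)$ has maximum value $\sigma^2_{\max}$. Querying $\boldsymbol x$ once returns $f(\boldsymbol x)+\epsilon$ with $\epsilon\sim\mathcal N(0,\sigma^2(\boldsymbol x))$, independently across queries. Fix a horizon $T$, a total budget $\mathbb B\in\mathbb N$, an effective noise variance $R^2>0$, $\delta\in(0,1)$, and $\lambda=1+2/T$. GP posterior: given data pairs $(\boldsymbol x_i,y_i)_{i=1}^m$, $\mu(\boldsymbol x)=\boldsymbol k(\boldsymbol x)^\top(\boldsymbol K+\lambda I)^{-1}\boldsymbol y$ and $s^2(\boldsymbol x,\boldsymbol x')=k(\boldsymbol x,\boldsymbol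 x')-\boldsymbol k(\boldsymbol x)^\top(\boldsymbol K+\lambda I)^{-1}\boldsymbol k(\boldsymbol x')$, with $\boldsymbol k(\boldsymbol x)=(k(\boldsymbol x,\boldsymbol x_i))_i$, $\boldsymbol K=(k(\boldsymbol x_i,\boldsymbol x_j))_{ij}$, $\boldsymbol y=(y_i)_i$. $\mu_{t-1}$ and $\sigma^2_{t-1}(\cdot,\cdot)$ denote these quantities computed from all pairs collected in iterations $1,\dots,t-1$, and $\sigma_{t-1}(\boldsymbol x)=\sqrt{\sigma^2_{t-1}(\boldsymbol x,\boldsymbol x)}$. Algorithm: in iteration $t$, for $b=1,2,\dots$: draw $f^{(b)}_t$ (independently, given the past) from the Gaussian process with mean $\mu_{t-1}$ and covariance $\beta_t^2\sigma^2_{t-1}(\cdot,\cdot)$; set $\boldsymbol x^{(b)}_t\in\arg\max_{\boldsymbol x\in\mathcal X}f^{(b)}_t(\boldsymbol x)$ and $n^{(b)}_t=\lceil\sigma^2(\boldsymbol x^{(b)}_t)/R^2\rceil$; stop at the first $b$ with $\sum_{b'\le b}n^{(b')}_t\ge\mathbb B$ and set $b_t=b-1$. Each $\boldsymbol x^{(b)}_t$, $b\in[b_t]=\{1,\dots,b_t\}$, is queried $n^{(b)}_t$ times, the empirical mean $y^{(b)}_t$ of these replicates is recorded, and the pairs $(\boldsymbol x^{(b)}_t,y^{(b)}_t)_{b\in[b_t]}$ are added to the data. $\tau_{t-1}=\sum_{t'=1}^{t-1}b_{t'}$. $\mathcal F_{t-1}$ denotes the history of all observations up to and including iteration $t-1$.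 $\Gamma_m$ is the maximum information gain $\max_{|A|\le m}\tfrac12\log\det(I+\lambda^{-1}K_A)$. $\beta_t=B+R\sqrt{2(\Gamma_{\tau_{t-1}}+1+\log(2/\delta))}$, $c_t=\beta_t(1+\sqrt{2\log(\mathbb B|\mathcal X|t^2)})$. $\boldsymbol x^*\in\arg\max_{\mathcal X}f$. $E^f(t)$ is the event that $|\mu_{t-1}(\boldsymbol x)-f(\boldsymbol x)|\le\beta_t\sigma_{t-1}(\boldsymbol x)$ for all $\boldsymbol x\in\mathcal X$. *)

theory Defs
  imports "HOL-Probability.Probability" "Jordan_Normal_Form.Gauss_Jordan_Elimination"
    "Jordan_Normal_Form.Determinant"
begin

definition se_kernel :: "real \<Rightarrow> 'a::euclidean_space \<Rightarrow> 'a \<Rightarrow> real" where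
  "se_kernel l x x' = exp (- (norm (x - x'))\<^sup>2 / (2 * l\<^sup>2))"

(* RKHS of k on the finite set X: span of kernel sections, with norm
   ||sum_y a_y k(.,y)||^2 = sum_x sum_y a_x a_y k(x,y) *)
definition rkhs_norm_le :: "('a \<Rightarrow> 'a \<Rightarrow> real) \<Rightarrow> 'a set \<Rightarrow> ('a \<Rightarrow> real) \<Rightarrow> real \<Rightarrow> bool" where
  "rkhs_norm_le k X f B \<longleftrightarrow>
     (\<exists>a::'a \<Rightarrow> real. (\<forall>x\<in>X. f x = (\<Sum>y\<in>X. a y * k x y)) \<and>
        sqrt (\<Sum>x\<in>X. \<Sum>y\<in>X. a x * a y * k x y) \<le> B)"

definition gram :: "('a \<Rightarrow> 'a \<Rightarrow> real) \<Rightarrow> 'a list \<Rightarrow> real mat" where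
  "gram k xs = mat (length xs) (length xs) (\<lambda>(i,j). k (xs ! i) (xs ! j))"

definition reg_inv :: "('a \<Rightarrow> 'a \<Rightarrow> real) \<Rightarrow> real \<Rightarrow> 'a list \<Rightarrow> real mat" where
  "reg_inv k lam xs = the (mat_inverse (gram k xs + lam \<cdot>\<^sub>m 1\<^sub>m (length xs)))"

definition post_mean :: "('a \<Rightarrow> 'a \<Rightarrow> real) \<Rightarrow> real \<Rightarrow> ('a \<times> real) list \<Rightarrow> 'a \<Rightarrow> real" where
  "post_mean k lam D x =
     (let xs = map fst D; ys = map snd D; Ki = reg_inv k lam xs in
      \<Sum>i<length D. \<Sum>j<length D. k x (xs ! i) * Ki $$ (i,j) * ys ! j)"

definition post_cov :: "('a \<Rightarrow> 'a \<Rightarrow> real) \<Rightarrow> real \<Rightarrow> ('a \<times> real) list \<Rightarrow> 'a \<Rightarrow> 'a \<Rightarrow> real" where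
  "post_cov k lam D x x' =
     (let xs = map fst D; Ki = reg_inv k lam xs in
      k x x' - (\<Sum>i<length D. \<Sum>j<length D. k x (xs ! i) * Ki $$ (i,j) * k (xs ! j) x'))"

definition post_sd :: "('a \<Rightarrow> 'a \<Rightarrow> real) \<Rightarrow> real \<Rightarrow> ('a \<times> real) list \<Rightarrow> 'a \<Rightarrow> real" where
  "post_sd k lam D x = sqrt (post_cov k lam D x x)"

(* Maximum information gain Gamma_m = max_{|A| <= m} 1/2 log det(I + lambda^{-1} K_A),
   A ranging over finite sequences (multisets) of points of X *)
definition max_info_gain :: "('a \<Rightarrow> 'a \<Rightarrow> real) \<Rightarrow> real \<Rightarrow> 'a set \<Rightarrow> nat \<Rightarrow> real" where
  "max_info_gain k lam X m =
     Max {1/2 * ln (det (1\<^sub>m (length A) + (1/lam) \<cdot>\<^sub>m gram k A)) | A. set A \<subseteq> X \<and> length A \<le> m}"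

definition gauss_measure :: "real \<Rightarrow> real \<Rightarrow> real measure" where
  "gauss_measure m v = (if v = 0 then return borel m else density lborel (normal_density m (sqrt v)))"

(* M is the law of a Gaussian process on the finite set X with mean mu and covariance C:
   every linear combination of the values is normal with the corresponding mean/variance *)
definition is_gp_law :: "'a set \<Rightarrow> ('a \<Rightarrow> real) \<Rightarrow> ('a \<Rightarrow> 'a \<Rightarrow> real) \<Rightarrow> ('a \<Rightarrow> real) measure \<Rightarrow> bool" where
  "is_gp_law X mu C M \<longleftrightarrow>
     prob_space M \<and> sets M = sets (Pi\<^sub>M X (\<lambda>_. borel)) \<and>
     (\<forall>a::'a \<Rightarrow> real.
        distr M borel (\<lambda>g. \<Sum>x\<in>X. a x * g x) =
        gauss_measure (\<Sum>x\<in>X. a x * mu x) (\<Sum>x\<in>X. \<Sum>y\<in>X. a x * a y * C x y))"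

end

theory Submission
  imports Defs
begin

text \<open>
  By the confidence bound, the maximiser x* of f lies at most one posterior standard deviation
  above the posterior mean, so the sample at x* exceeds f(x*) with probability at least
  exp(-2)/sqrt(2 pi) \<ge> p (Gaussian anti-concentration). At a saturated point x, f(x*) lies more
  than s = sqrt(2 ln N) posterior standard deviations above the posterior mean, where
  N = Budget |X| t^2, so the sample at x exceeds f(x*) with probability at most
  exp(-s^2/2) = 1/N (Gaussian tail bound). If the argmax of the sample is saturated while the
  sample at x* exceeds f(x*), then the sample at some saturated point exceeds f(x*) as well, and a
  union bound over the at most |X| saturated points gives the claim.
\<close>

text \<open>On \<open>[m + sd, m + 2 sd]\<close> the density is at least its value at \<open>m + 2 sd\<close>.\<close>
lemma normal_density_tail_lower:
  fixes m sd :: real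
  assumes sd: "0 < sd"
  shows "exp (-2) / sqrt (2 * pi) \<le> measure (density lborel (normal_density m sd)) {m + sd..}"
proof -
  interpret N: prob_space "density lborel (normal_density m sd)"
    by (rule prob_space_normal_density[OF sd])
  define K where "K = 1 / sqrt (2 * pi * sd\<^sup>2)"
  have pointwise: "ennreal (K * exp (-2)) * indicator {m + sd..m + 2 * sd} x
      \<le> ennreal (normal_density m sd x) * indicator {m + sd..} x" for x
  proof (cases "x \<in> {m + sd..m + 2 * sd}")
    case True
    then have "(x - m)\<^sup>2 \<le> (2 * sd)\<^sup>2" using sd by (intro power_mono) auto
    then have "-2 \<le> - (x - m)\<^sup>2 / (2 * sd\<^sup>2)" using sd by (simp add: field_simps power2_eq_square)
    then have "K * exp (-2) \<le> normal_density m sd x"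
      unfolding normal_density_def K_def by (intro mult_left_mono) auto
    then show ?thesis using True by (auto simp: indicator_def)
  qed (auto simp: indicator_def)
  have "ennreal (K * exp (-2) * sd) = ennreal (K * exp (-2)) * emeasure lborel {m + sd..m + 2 * sd}"
    using sd by (subst ennreal_mult) (auto simp: K_def)
  also have "\<dots> = (\<integral>\<^sup>+x. ennreal (K * exp (-2)) * indicator {m + sd..m + 2 * sd} x \<partial>lborel)"
    by (simp add: nn_integral_cmult_indicator)
  also have "\<dots> \<le> (\<integral>\<^sup>+x. ennreal (normal_density m sd x) * indicator {m + sd..} x \<partial>lborel)"
    by (intro nn_integral_mono pointwise)
  also have "\<dots> = ennreal (N.prob {m + sd..})"
    by (simp add: emeasure_density N.emeasure_eq_measure flip: emeasure_density)
  finally have "K * exp (-2) * sd \<le> N.prob {m + sd..}"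
    by (metis ennreal_le_iff measure_nonneg)
  moreover have "K * exp (-2) * sd = exp (-2) / sqrt (2 * pi)"
    using sd by (simp add: K_def real_sqrt_mult)
  ultimately show ?thesis by simp
qed

text \<open>On \<open>[m + s sd, \<infinity>)\<close> the density is dominated by \<open>(x - m)/(s sd)\<close> times itself,
  which has the explicit antiderivative \<open>F\<close>.\<close>
lemma normal_density_tail_upper:
  fixes m sd s :: real
  assumes sd: "0 < sd" and s: "1 \<le> s"
  shows "measure (density lborel (normal_density m sd)) {m + s * sd..} \<le> exp (- s\<^sup>2 / 2)"
proof -
  interpret N: prob_space "density lborel (normal_density m sd)"
    by (rule prob_space_normal_density[OF sd])
  define K where "K = 1 / (sqrt (2 * pi) * sd)"
  define E where "E x = exp (- (x - m)\<^sup>2 / (2 * sd\<^sup>2))" for x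
  define g where "g x = (x - m) / (s * sd) * (K * E x)" for x
  define F where "F x = - (sd / s) * K * E x" for x
  define a where "a = m + s * sd"
  have density: "normal_density m sd x = K * E x" for x
    using sd by (simp add: normal_density_def K_def E_def real_sqrt_mult)
  have pointwise: "ennreal (normal_density m sd x) * indicator {a..} x \<le> ennreal (g x) * indicator {a..} x" for x
  proof (cases "a \<le> x")
    case True
    then have "1 \<le> (x - m) / (s * sd)" using sd s by (simp add: a_def field_simps)
    then have "K * E x \<le> g x"
      using mult_right_mono[of 1 "(x - m) / (s * sd)" "K * E x"] sd
      by (simp add: g_def K_def E_def)
    then show ?thesis using True by (simp add: density indicator_def ennreal_leI)
  qed (simp add: indicator_def)
  have deriv: "DERIV F x :> g x" for x
    unfolding F_def g_def E_def using sd s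
    by (auto intro!: derivative_eq_intros simp: field_simps power2_eq_square)
  have lim: "(F \<longlongrightarrow> 0) at_top"
    unfolding F_def E_def using sd by real_asymp
  have g_nonneg: "0 \<le> g x" if "a \<le> x" for x
  proof -
    have "0 \<le> s * sd" using sd s by simp
    then have "m \<le> x" using that unfolding a_def by linarith
    then show ?thesis
      unfolding g_def K_def E_def using sd s by (intro mult_nonneg_nonneg divide_nonneg_pos) auto
  qed
  have "ennreal (N.prob {a..}) = (\<integral>\<^sup>+x. ennreal (normal_density m sd x) * indicator {a..} x \<partial>lborel)"
    by (simp add: emeasure_density N.emeasure_eq_measure flip: emeasure_density)
  also have "\<dots> \<le> (\<integral>\<^sup>+x. ennreal (g x) * indicator {a..} x \<partial>lborel)"
    by (intro nn_integral_mono pointwise)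
  also have "\<dots> = ennreal (0 - F a)"
    by (rule nn_integral_FTC_atLeast[OF _ deriv g_nonneg lim]) (simp add: g_def E_def)
  finally have "N.prob {a..} \<le> - F a"
    using sd s by (subst (asm) ennreal_le_iff) (auto simp: F_def K_def E_def)
  also have "- F a = exp (- s\<^sup>2 / 2) / (s * sqrt (2 * pi))"
    using sd s by (simp add: a_def F_def K_def E_def power_mult_distrib field_simps)
  also have "\<dots> \<le> exp (- s\<^sup>2 / 2) / 1"
    using s pi_gt3 mult_mono[of 1 s 1 "sqrt (2 * pi)"] by (intro divide_left_mono) auto
  finally show ?thesis by (simp add: a_def)
qed

lemma gauss_measure_tail_lower:
  fixes m v a :: real
  assumes v: "0 \<le> v" and a: "a \<le> m + sqrt v"
  shows "exp (-2) / sqrt (2 * pi) \<le> measure (gauss_measure m v) {a..}"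
proof (cases "v = 0")
  case True
  have "exp (-2) / sqrt (2 * pi) \<le> 1 / 1"
    using pi_gt3 by (intro frac_le) auto
  then show ?thesis using True a by (simp add: gauss_measure_def measure_return)
next
  case False
  then have sd: "0 < sqrt v" using v by simp
  interpret N: prob_space "density lborel (normal_density m (sqrt v))"
    by (rule prob_space_normal_density[OF sd])
  have "exp (-2) / sqrt (2 * pi) \<le> N.prob {m + sqrt v..}"
    by (rule normal_density_tail_lower[OF sd])
  also have "\<dots> \<le> N.prob {a..}"
    using a by (intro N.finite_measure_mono) auto
  finally show ?thesis using False by (simp add: gauss_measure_def)
qed

lemma gauss_measure_tail_upper:
  fixes m v a s :: real
  assumes v: "0 \<le> v" and s: "1 \<le> s" and a: "m + s * sqrt v < a"
  shows "measure (gauss_measure m v) {a..} \<le> exp (- s\<^sup>2 / 2)"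
proof (cases "v = 0")
  case True
  then show ?thesis using a by (simp add: gauss_measure_def measure_return)
next
  case False
  then have sd: "0 < sqrt v" using v by simp
  interpret N: prob_space "density lborel (normal_density m (sqrt v))"
    by (rule prob_space_normal_density[OF sd])
  have "N.prob {a..} \<le> N.prob {m + s * sqrt v..}"
    using a by (intro N.finite_measure_mono) auto
  also have "\<dots> \<le> exp (- s\<^sup>2 / 2)"
    by (rule normal_density_tail_upper[OF sd s])
  finally show ?thesis using False by (simp add: gauss_measure_def)
qed

lemma is_gp_law_eval_measurable:
  assumes "is_gp_law X mu C M" "x \<in> X"
  shows "(\<lambda>g. g x) \<in> borel_measurable M"
proof -
  have "sets M = sets (Pi\<^sub>M X (\<lambda>_. borel))" using assms(1) unfolding is_gp_law_def by blast
  then show ?thesis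
    using measurable_component_singleton[OF assms(2), of "\<lambda>_. borel"] measurable_cong_sets by blast
qed

lemma is_gp_law_marginal:
  assumes "is_gp_law X mu C M" "finite X" "x \<in> X"
  shows "distr M borel (\<lambda>g. g x) = gauss_measure (mu x) (C x x)"
proof -
  have "distr M borel (\<lambda>g. \<Sum>y\<in>X. of_bool (y = x) * g y)
      = gauss_measure (\<Sum>y\<in>X. of_bool (y = x) * mu y)
          (\<Sum>y\<in>X. \<Sum>z\<in>X. of_bool (y = x) * of_bool (z = x) * C y z)"
    using assms(1) unfolding is_gp_law_def by presburger
  then show ?thesis using assms(2,3) by (simp add: mult.assoc sum.delta flip: sum_distrib_left)
qed

lemma is_gp_law_prob_ge:
  assumes gp: "is_gp_law X mu C M" and X: "finite X" "x \<in> X"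
  shows "measure M {g \<in> space M. a \<le> g x} = measure (gauss_measure (mu x) (C x x)) {a..}"
proof -
  have "{g \<in> space M. a \<le> g x} = (\<lambda>g. g x) -` {a..} \<inter> space M" by auto
  then show ?thesis
    using is_gp_law_marginal[OF gp X] measure_distr[OF is_gp_law_eval_measurable[OF gp X(2)], of "{a..}"]
    by simp
qed

lemma (in prob_space) prob_argmax_in_le:
  fixes Y :: "'b \<Rightarrow> 'a \<Rightarrow> real"
  assumes Y: "\<And>x. x \<in> X \<Longrightarrow> random_variable borel (Y x)"
    and argmax: "\<And>\<omega> x. \<omega> \<in> space M \<Longrightarrow> x \<in> X \<Longrightarrow> Y x \<omega> \<le> Y (sel \<omega>) \<omega>"
    and S: "finite S" "S \<subseteq> X" and y: "y \<in> X"
  shows "prob {\<omega> \<in> space M. sel \<omega> \<in> S}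
    \<le> 1 - prob {\<omega> \<in> space M. a \<le> Y y \<omega>} + (\<Sum>x\<in>S. prob {\<omega> \<in> space M. a \<le> Y x \<omega>})"
proof -
  let ?E = "\<lambda>x. {\<omega> \<in> space M. a \<le> Y x \<omega>}"
  have E: "?E x \<in> events" if "x \<in> X" for x
  proof -
    have "?E x = Y x -` {a..} \<inter> space M" by auto
    then show ?thesis using measurable_sets[OF Y[OF that], of "{a..}"] by simp
  qed
  have "{\<omega> \<in> space M. sel \<omega> \<in> S} \<subseteq> (space M - ?E y) \<union> (\<Union>x\<in>S. ?E x)"
    using argmax[OF _ y] by force
  moreover have "(space M - ?E y) \<union> (\<Union>x\<in>S. ?E x) \<in> events"
    using E S y by (intro sets.Un sets.compl_sets sets.finite_UN) auto
  ultimately have "prob {\<omega> \<in> space M. sel \<omega> \<in> S} \<le> prob ((space M - ?E y) \<union> (\<Union>x\<in>S. ?E x))"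
    by (rule finite_measure_mono)
  also have "\<dots> \<le> prob (space M - ?E y) + prob (\<Union>x\<in>S. ?E x)"
    using E S y by (intro measure_Un_le) auto
  also have "\<dots> \<le> 1 - prob (?E y) + (\<Sum>x\<in>S. prob (?E x))"
  proof (rule add_mono)
    show "prob (space M - ?E y) \<le> 1 - prob (?E y)"
      using prob_compl[OF E[OF y]] by simp
    show "prob (\<Union>x\<in>S. ?E x) \<le> (\<Sum>x\<in>S. prob (?E x))"
      using E S by (intro finite_measure_subadditive_finite) auto
  qed
  finally show ?thesis .
qed

lemma is_gp_law_prob_argmax_notin_ge:
  assumes gp: "is_gp_law X mu C M" and X: "finite X"
    and sel: "sel \<in> measurable M (count_space X)"
    and argmax: "\<And>g x. g \<in> space M \<Longrightarrow> x \<in> X \<Longrightarrow> g x \<le> g (sel g)"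
    and S: "S \<subseteq> X" and y: "y \<in> X" "0 \<le> C y y" "a \<le> mu y + sqrt (C y y)"
    and s: "1 \<le> s"
    and var: "\<And>x. x \<in> S \<Longrightarrow> 0 \<le> C x x"
    and far: "\<And>x. x \<in> S \<Longrightarrow> mu x + s * sqrt (C x x) < a"
  shows "exp (-2) / sqrt (2 * pi) - card S * exp (- s\<^sup>2 / 2)
    \<le> measure M {g \<in> space M. sel g \<in> X - S}"
proof -
  interpret prob_space M using gp unfolding is_gp_law_def by blast
  let ?E = "\<lambda>x. {g \<in> space M. a \<le> g x}"
  have finS: "finite S" using S X by (rule finite_subset)
  have "{g \<in> space M. sel g \<in> S} = sel -` S \<inter> space M" by auto
  then have sel_S: "{g \<in> space M. sel g \<in> S} \<in> events"
    using measurable_sets[OF sel, of S] S by simp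
  have "{g \<in> space M. sel g \<in> X - S} = space M - {g \<in> space M. sel g \<in> S}"
    using measurable_space[OF sel] by auto
  then have "prob {g \<in> space M. sel g \<in> X - S} = 1 - prob {g \<in> space M. sel g \<in> S}"
    using prob_compl[OF sel_S] by simp
  moreover have "prob {g \<in> space M. sel g \<in> S} \<le> 1 - prob (?E y) + (\<Sum>x\<in>S. prob (?E x))"
    using is_gp_law_eval_measurable[OF gp] argmax finS S y(1) by (rule prob_argmax_in_le)
  moreover have "exp (-2) / sqrt (2 * pi) \<le> prob (?E y)"
    using gauss_measure_tail_lower[OF y(2,3)] is_gp_law_prob_ge[OF gp X y(1)] by simp
  moreover have "(\<Sum>x\<in>S. prob (?E x)) \<le> card S * exp (- s\<^sup>2 / 2)"
  proof (rule sum_bounded_above)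
    fix x assume "x \<in> S"
    with var far S show "prob (?E x) \<le> exp (- s\<^sup>2 / 2)"
      using gauss_measure_tail_upper[OF _ s] is_gp_law_prob_ge[OF gp X] by auto
  qed
  ultimately show ?thesis by linarith
qed

lemma is_gp_law_argmax_unsaturated_ge:
  fixes f :: "'a \<Rightarrow> real" and s :: real
  assumes gp: "is_gp_law X mu C M" and X: "finite X" "X \<noteq> {}"
    and sel: "sel \<in> measurable M (count_space X)"
    and argmax: "\<And>g x. g \<in> space M \<Longrightarrow> x \<in> X \<Longrightarrow> g x \<le> g (sel g)"
    and var: "\<And>x. x \<in> X \<Longrightarrow> 0 \<le> C x x"
    and conf: "\<And>x. x \<in> X \<Longrightarrow> \<bar>mu x - f x\<bar> \<le> sqrt (C x x)"
    and s: "1 \<le> s"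
    and S: "S = {x \<in> X. (1 + s) * sqrt (C x x) < Max (f ` X) - f x}"
  shows "exp (-2) / sqrt (2 * pi) - card S * exp (- s\<^sup>2 / 2) \<le> measure M {g \<in> space M. sel g \<in> X - S}"
proof -
  have "Max (f ` X) \<in> f ` X" using X by (intro Max_in) auto
  then obtain x0 where x0: "x0 \<in> X" "f x0 = Max (f ` X)" by auto
  have far: "mu x + s * sqrt (C x x) < f x0" if "x \<in> S" for x
    using that conf[of x] x0(2) S by (auto simp: abs_le_iff algebra_simps)
  have near: "f x0 \<le> mu x0 + sqrt (C x0 x0)"
    using conf[OF x0(1)] by (simp add: abs_le_iff)
  show ?thesis
    using x0(1) var near far s S
    by (intro is_gp_law_prob_argmax_notin_ge[OF gp X(1) sel argmax, where y = x0 and a = "f x0"]) auto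
qed

lemma one_div_4_exp_sqrt_pi_le:
  "1 / (4 * exp 1 * sqrt pi) \<le> exp (-2) / sqrt (2 * pi)"
proof -
  have exp2: "exp (2::real) = exp 1 * exp 1" by (simp flip: exp_add)
  have "exp (2::real) \<le> (272/100) * (272/100)"
    unfolding exp2 using e_less_272 by (intro mult_mono) auto
  moreover have "(exp 1 * sqrt 2)\<^sup>2 = 2 * exp (2::real)"
    by (simp add: power_mult_distrib exp2 power2_eq_square)
  ultimately have "(exp 1 * sqrt 2)\<^sup>2 \<le> (4::real)\<^sup>2"
    by simp
  then have "exp 1 * sqrt 2 \<le> 4"
    by (rule power2_le_imp_le) simp
  then have "exp 1 * sqrt 2 * (exp 1 * sqrt pi) \<le> 4 * (exp 1 * sqrt pi)"
    by (rule mult_right_mono) simp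
  moreover have "exp 2 * sqrt (2 * pi) = exp 1 * sqrt 2 * (exp 1 * sqrt pi)"
    by (simp add: exp2 real_sqrt_mult mult_ac)
  ultimately have "1 / (4 * exp 1 * sqrt pi) \<le> 1 / (exp 2 * sqrt (2 * pi))"
    by (intro divide_left_mono) (auto simp: mult_ac)
  also have "\<dots> = exp (-2) / sqrt (2 * pi)"
    by (simp add: exp_minus divide_inverse)
  finally show ?thesis .
qed

lemma exp_neg_half_sqrt_two_ln:
  fixes N :: real assumes "1 \<le> N"
  shows "exp (- (sqrt (2 * ln N))\<^sup>2 / 2) = 1 / N"
proof -
  have "(sqrt (2 * ln N))\<^sup>2 = 2 * ln N"
    using ln_ge_zero[OF assms] by simp
  then show ?thesis
    using assms by (simp add: exp_minus exp_ln inverse_eq_divide)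
qed

lemma one_le_sqrt_two_ln:
  fixes N :: real assumes "exp 1 \<le> N"
  shows "1 \<le> sqrt (2 * ln N)"
proof -
  have "1 \<le> ln N"
    using assms ln_ge_iff[of N 1] exp_gt_zero[of 1] by linarith
  then show ?thesis by simp
qed

lemma card_div_budget_le:
  fixes S X :: "'a set" and b t :: nat
  assumes "finite X" "S \<subseteq> X" "1 \<le> card X" "1 \<le> b" "1 \<le> t"
  shows "card S * (1 / (real b * real (card X) * (real t)\<^sup>2)) \<le> 1 / (real t)\<^sup>2"
proof -
  have "card S \<le> card X" using assms(1,2) by (rule card_mono)
  then have "card S * (1 / (real b * real (card X) * (real t)\<^sup>2))
      \<le> card X * (1 / (real b * real (card X) * (real t)\<^sup>2))"
    by (intro mult_right_mono) auto
  also have "\<dots> = 1 / (real b * (real t)\<^sup>2)"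
    using assms(3) by (simp add: field_simps)
  also have "\<dots> \<le> 1 / (real t)\<^sup>2"
    using assms(4,5) by (intro divide_left_mono) auto
  finally show ?thesis .
qed

lemma max_info_gain_nonneg:
  assumes "finite X"
  shows "0 \<le> max_info_gain k lam X m"
proof -
  let ?h = "\<lambda>A. 1/2 * ln (det (1\<^sub>m (length A) + (1/lam) \<cdot>\<^sub>m gram k A))"
  have fin: "finite {?h A | A. set A \<subseteq> X \<and> length A \<le> m}"
    using finite_lists_length_le[OF assms, of m] by (rule finite_image_set)
  have mem: "?h [] \<in> {?h A | A. set A \<subseteq> X \<and> length A \<le> m}" by (intro CollectI exI[of _ "[]"]) simp
  have z: "?h [] = 0"
    by (subst det_dim_zero) (auto simp: gram_def)
  have "?h [] \<le> Max {?h A | A. set A \<subseteq> X \<and> length A \<le> m}" by (rule Max_ge[OF fin mem])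
  then show ?thesis unfolding max_info_gain_def z .
qed

text \<open>Isabelle's sqrt is odd, so only the confidence bound rules out a negative posterior variance.\<close>
lemma nonneg_of_abs_le_mult_sqrt:
  fixes b u v :: real assumes "0 < b" "\<bar>u\<bar> \<le> b * sqrt v"
  shows "0 \<le> v"
proof (rule ccontr)
  assume "\<not> 0 \<le> v"
  then have "b * sqrt v < 0" using assms(1) by (simp add: mult_pos_neg)
  then show False using assms(2) by linarith
qed

theorem mainTheorem5:
  fixes X :: "'a::euclidean_space set"
    and l B R \<delta> :: real
    and f :: "'a \<Rightarrow> real"
    and T Budget t :: nat
    and D :: "('a \<times> real) list"
    and M :: "('a \<Rightarrow> real) measure"
    and sel :: "('a \<Rightarrow> real) \<Rightarrow> 'a"
    and k :: "'a \<Rightarrow> 'a \<Rightarrow> real" and lam \<beta> c p :: real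
    and \<Delta> :: "'a \<Rightarrow> real" and S :: "'a set"
  assumes "k = se_kernel l"
    and "lam = 1 + 2 / real T"
    and "\<beta> = B + R * sqrt (2 * (max_info_gain k lam X (length D) + 1 + ln (2 / \<delta>)))"
    and "c = \<beta> * (1 + sqrt (2 * ln (real Budget * real (card X) * (real t)\<^sup>2)))"
    and "p = 1 / (4 * exp 1 * sqrt pi)"
    and "\<Delta> = (\<lambda>x. Max (f ` X) - f x)"
    and "S = {x \<in> X. \<Delta> x > c * post_sd k lam D x}"
    and "finite X" and "X \<noteq> {}" and "l > 0"
    and "B > 0" and "rkhs_norm_le k X f B"
    and "T \<ge> 1" and "Budget \<ge> 1" and "R > 0" and "0 < \<delta>" and "\<delta> < 1"
    and "t \<ge> 1"
    and "set (map fst D) \<subseteq> X"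
    and "\<forall>x\<in>X. \<bar>post_mean k lam D x - f x\<bar> \<le> \<beta> * post_sd k lam D x"
    and "is_gp_law X (post_mean k lam D) (\<lambda>x x'. \<beta>\<^sup>2 * post_cov k lam D x x') M"
    and "sel \<in> measurable M (count_space X)"
    and "\<forall>g\<in>space M. sel g \<in> X \<and> (\<forall>x\<in>X. g x \<le> g (sel g))"
  shows "measure M {g \<in> space M. sel g \<in> X - S} \<ge> p - 1 / (real t)\<^sup>2"
proof -
  let ?cov = "post_cov k lam D" and ?sd = "post_sd k lam D"
  have p: "p \<le> exp (-2) / sqrt (2 * pi)"
    using one_div_4_exp_sqrt_pi_le assms(5) by simp
  show ?thesis
  proof (cases "t = 1")
    case True
    have "exp (-2) / sqrt (2 * pi) \<le> 1 / 1"
      using pi_gt3 by (intro frac_le) auto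
    with p have "p \<le> 1" by linarith
    then have "p - 1 / (real t)\<^sup>2 \<le> 0" using True by simp
    then show ?thesis
      using measure_nonneg[of M "{g \<in> space M. sel g \<in> X - S}"] by linarith
  next
    case False
    define N where "N = real Budget * real (card X) * (real t)\<^sup>2"
    define s where "s = sqrt (2 * ln N)"
    have X: "1 \<le> card X" using assms(8,9) by (simp add: Suc_le_eq card_gt_0_iff)
    have "2 \<le> t" using False assms(18) by simp
    then have "4 \<le> (real t)\<^sup>2"
      using power_mono[of 2 "real t" 2] by simp
    moreover have "1 \<le> real Budget * real (card X)"
      using assms(14) X by (metis mult_mono' of_nat_1 of_nat_le_iff mult_1_left zero_le_one)
    ultimately have N: "4 \<le> N"
      unfolding N_def using mult_mono[of 1 "real Budget * real (card X)" 4 "(real t)\<^sup>2"] by simp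
    have s: "1 \<le> s"
      unfolding s_def using exp_le N by (intro one_le_sqrt_two_ln) linarith
    have "0 \<le> ln (2 / \<delta>)"
      using assms(16,17) by (intro ln_ge_zero) (simp add: field_simps)
    then have "0 \<le> R * sqrt (2 * (max_info_gain k lam X (length D) + 1 + ln (2 / \<delta>)))"
      using assms(15) max_info_gain_nonneg[OF assms(8), of k lam "length D"] by simp
    then have \<beta>: "0 < \<beta>" using assms(3,11) by linarith
    have var: "0 \<le> ?cov x x" if "x \<in> X" for x
      using nonneg_of_abs_le_mult_sqrt[OF \<beta>] assms(20) that unfolding post_sd_def by blast
    have sd: "sqrt (\<beta>\<^sup>2 * ?cov x x) = \<beta> * ?sd x" if "x \<in> X" for x
      using \<beta> var[OF that] by (simp add: post_sd_def real_sqrt_mult)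
    have "S = {x \<in> X. (1 + s) * sqrt (\<beta>\<^sup>2 * ?cov x x) < Max (f ` X) - f x}"
      using assms(4,6,7) sd by (auto simp: s_def N_def mult_ac)
    then have "exp (-2) / sqrt (2 * pi) - card S * exp (- s\<^sup>2 / 2) \<le> measure M {g \<in> space M. sel g \<in> X - S}"
      using assms(8,9,20,23) \<beta> var sd s
      by (intro is_gp_law_argmax_unsaturated_ge[OF assms(21) _ _ assms(22)]) auto
    moreover have "exp (- s\<^sup>2 / 2) = 1 / N"
      unfolding s_def using N by (intro exp_neg_half_sqrt_two_ln) linarith
    moreover have "card S * (1 / N) \<le> 1 / (real t)\<^sup>2"
      unfolding N_def using assms(7,8,14,18) X by (intro card_div_budget_le) auto
    ultimately show ?thesis using p by simp
  qed
qed

end
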